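(* Let $(M^n,c)$ be a conformal Riemannian manifold with $n\ge3$, fix $m\in\mathbb{R}$, and let $u,v\in\mathcal{E}[1]$ satisfy, in a scale $g\in c$ (regarding $u,v$ as functions) and for some constants $\lambda,\mu$: $0=\big(uv\,\mathrm{Ric}+(m+n-2)v\nabla^2u-mu\nabla^2v\big)_0$, $n\lambda v^2=(uv)^2R+(m+2n-2)uv^2\Delta u-mu^2v\Delta v-(m+n-1)nv^2|\nabla u|^2+mnuv\langle\nabla u,\nabla v\rangle$, $n\mu u^2=(uv)^2R+(m+n-2)uv^2\Delta u-(m-n)u^2v\Delta v-(m+n-2)nuv\langle\nabla u,\nabla v\rangle+n(m-1)u^2|\nabla v|^2$, where $T_0=T-\frac1n(\operatorname{tr}_gT)g$. Then $I=\frac1n\mathbb{D}u$ and $J=\frac1n\mathbb{D}v$ form a quasi-Einstein pair, i.e. $0=(m+n-2)\langle X,J\rangle\nabla I-m\langle X,I\rangle\nabla J-\frac1n\big((m+n-2)\langle\nabla I,J\rangle-m\langle\nabla J,I\rangle\big)X$ and $0=mn(m+n-2)\langle I,J\rangle\big(\langle X,J\rangle\nabla\langle X,I\rangle-\langle X,I\rangle\nabla\langle X,J\rangle\big)-m(m+n-2)(2m+n-2)\langle X,I\rangle\langle X,J\rangle\nabla\langle I,J\rangle+2(m-1)(m+n-1)(m+n-2)\langle X,I\rangle\langle X,J\rangle\langle\nabla I,J\rangle+2m(m-1)(m+n-1)\langle X,I\rangle\langle X,J\rangle\langle\nabla J,I\rangle$.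
   Context: $(M^n,c)$ is a smooth manifold with a conformal class $c$ of Riemannian metrics. $\mathcal{E}[w]$ is the space of conformal densities of weight $w$: a scale $g\in c$ identifies a density with a function, and $g\mapsto e^{2s}g$ multiplies it by $e^{ws}$. The standard tractor bundle $\mathbb{T}$ is a rank $n+2$ bundle; a scale $g$ identifies $\mathbb{T}\cong\mathbb{R}\oplus TM\oplus\mathbb{R}$, and a tractor $I$ is written as a column with top component $\sigma$, middle $\omega$ (a vector field) and bottom $\rho$, which under $g\mapsto e^{2s}g$ change by $\sigma\mapsto e^s\sigma$, $\omega\mapsto e^{-s}(\omega+\sigma\nabla s)$, $\rho\mapsto e^{-s}(\rho-g(\nabla s,\omega)-\frac12|\nabla s|^2\sigma)$. The tractor metric is $\langle I,K\rangle$, with $\langle I,I\rangle=2\sigma\rho+|\omega|_g^2$. $X\in\mathcal{T}[1]$ has top and middle components $0$ and bottom component $1$, so $\langle X,I\rangle=\sigma$. $P=\frac{1}{n-2}(\mathrm{Ric}-\mathrm{J}g)$ is the Schouten tensor, $\mathrm{J}=\operatorname{tr}_gP$. The normal tractor connection $\nabla$ is, in a scale: $\nabla_xI$ has top $x\sigma-g(\omega,x)$, middle $\nabla_x\omega+\sigma P(x)+\rho x$ ($P(x)$ the vector dual to $P(x,\cdot)$), bottom $x\rho-P(x,\omega)$; it preserves the tractor metric. In the displayed tractor equations, $\nabla I$ is a tractor-valued one-form, $\langle\nabla I,J\rangle$ the one-form $x\mapsto\langle\nabla_xI,J\rangle$, and $\nabla\langle\cdot,\cdot\rangle$ the differential of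 a density. The tractor-$D$ operator $\mathbb{D}:\mathcal{E}[w]\to\mathcal{T}[w-1]$ is: top $w(n+2w-2)u$, middle $(n+2w-2)\nabla u$, bottom $-(\Delta u+w\mathrm{J}u)$, $\Delta=\operatorname{tr}_g\nabla^2$. *)

theory Defs
  imports "HOL-Analysis.Analysis"
begin

text \<open>Local-coordinate model: an open set U of real^'n (a coordinate chart of M),
  dimension n = CARD('n). A Riemannian metric in the chosen scale is given by its
  components g x i j. Tractors are written in the splitting determined by the scale g:
  (top sigma, middle vector components omega^b, bottom rho).\<close>

definition dimn :: "'n::finite itself \<Rightarrow> real" where
  "dimn _ = real CARD('n)"

definition pd :: "'n::finite \<Rightarrow> (real^'n \<Rightarrow> real) \<Rightarrow> real^'n \<Rightarrow> real" where
  "pd i f x = deriv (\<lambda>t. f (x + t *\<^sub>R axis i 1)) 0"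

fun ipd :: "'n::finite list \<Rightarrow> (real^'n \<Rightarrow> real) \<Rightarrow> real^'n \<Rightarrow> real" where
  "ipd [] f = f"
| "ipd (i # is) f = pd i (ipd is f)"

definition smooth_on :: "(real^'n::finite) set \<Rightarrow> (real^'n \<Rightarrow> real) \<Rightarrow> bool" where
  "smooth_on U f \<longleftrightarrow> (\<forall>is. continuous_on U (ipd is f) \<and>
      (\<forall>i. \<forall>x\<in>U. (\<lambda>t. ipd is f (x + t *\<^sub>R axis i 1)) differentiable (at 0)))"

definition riemannian_metric_on ::
  "(real^'n::finite) set \<Rightarrow> (real^'n \<Rightarrow> 'n \<Rightarrow> 'n \<Rightarrow> real) \<Rightarrow> bool" where
  "riemannian_metric_on U g \<longleftrightarrow>
     (\<forall>i j. smooth_on U (\<lambda>x. g x i j)) \<and>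
     (\<forall>x\<in>U. \<forall>i j. g x i j = g x j i) \<and>
     (\<forall>x\<in>U. \<forall>v::real^'n. v \<noteq> 0 \<longrightarrow> (\<Sum>i\<in>UNIV. \<Sum>j\<in>UNIV. g x i j * v$i * v$j) > 0)"

definition ginv :: "(real^'n::finite \<Rightarrow> 'n \<Rightarrow> 'n \<Rightarrow> real) \<Rightarrow> real^'n \<Rightarrow> 'n \<Rightarrow> 'n \<Rightarrow> real" where
  "ginv g x i j = matrix_inv (\<chi> a b. g x a b) $ i $ j"

definition chr :: "(real^'n::finite \<Rightarrow> 'n \<Rightarrow> 'n \<Rightarrow> real) \<Rightarrow> 'n \<Rightarrow> 'n \<Rightarrow> 'n \<Rightarrow> real^'n \<Rightarrow> real" where
  "chr g k i j x = (1/2) * (\<Sum>l\<in>UNIV. ginv g x k l *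
      (pd i (\<lambda>y. g y j l) x + pd j (\<lambda>y. g y i l) x - pd l (\<lambda>y. g y i j) x))"

definition ricci :: "(real^'n::finite \<Rightarrow> 'n \<Rightarrow> 'n \<Rightarrow> real) \<Rightarrow> 'n \<Rightarrow> 'n \<Rightarrow> real^'n \<Rightarrow> real" where
  "ricci g i j x = (\<Sum>k\<in>UNIV. pd k (chr g k i j) x - pd j (chr g k i k) x
      + (\<Sum>l\<in>UNIV. chr g k k l x * chr g l i j x - chr g k j l x * chr g l i k x))"

definition scal :: "(real^'n::finite \<Rightarrow> 'n \<Rightarrow> 'n \<Rightarrow> real) \<Rightarrow> real^'n \<Rightarrow> real" where
  "scal g x = (\<Sum>i\<in>UNIV. \<Sum>j\<in>UNIV. ginv g x i j * ricci g i j x)"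

definition Jfun :: "(real^'n::finite \<Rightarrow> 'n \<Rightarrow> 'n \<Rightarrow> real) \<Rightarrow> real^'n \<Rightarrow> real" where
  "Jfun g x = scal g x / (2 * (dimn TYPE('n) - 1))"

definition schouten :: "(real^'n::finite \<Rightarrow> 'n \<Rightarrow> 'n \<Rightarrow> real) \<Rightarrow> 'n \<Rightarrow> 'n \<Rightarrow> real^'n \<Rightarrow> real" where
  "schouten g i j x = (ricci g i j x - Jfun g x * g x i j) / (dimn TYPE('n) - 2)"

definition hess :: "(real^'n::finite \<Rightarrow> 'n \<Rightarrow> 'n \<Rightarrow> real) \<Rightarrow> (real^'n \<Rightarrow> real) \<Rightarrow> 'n \<Rightarrow> 'n \<Rightarrow> real^'n \<Rightarrow> real" where
  "hess g u i j x = pd i (pd j u) x - (\<Sum>k\<in>UNIV. chr g k i j x * pd k u x)"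

definition lap :: "(real^'n::finite \<Rightarrow> 'n \<Rightarrow> 'n \<Rightarrow> real) \<Rightarrow> (real^'n \<Rightarrow> real) \<Rightarrow> real^'n \<Rightarrow> real" where
  "lap g u x = (\<Sum>i\<in>UNIV. \<Sum>j\<in>UNIV. ginv g x i j * hess g u i j x)"

definition grad :: "(real^'n::finite \<Rightarrow> 'n \<Rightarrow> 'n \<Rightarrow> real) \<Rightarrow> (real^'n \<Rightarrow> real) \<Rightarrow> 'n \<Rightarrow> real^'n \<Rightarrow> real" where
  "grad g u b x = (\<Sum>c\<in>UNIV. ginv g x b c * pd c u x)"

definition ginner :: "(real^'n::finite \<Rightarrow> 'n \<Rightarrow> 'n \<Rightarrow> real) \<Rightarrow> (real^'n \<Rightarrow> real) \<Rightarrow> (real^'n \<Rightarrow> real) \<Rightarrow> real^'n \<Rightarrow> real" where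
  "ginner g u v x = (\<Sum>i\<in>UNIV. \<Sum>j\<in>UNIV. ginv g x i j * pd i u x * pd j v x)"

definition tracefree :: "(real^'n::finite \<Rightarrow> 'n \<Rightarrow> 'n \<Rightarrow> real) \<Rightarrow> ('n \<Rightarrow> 'n \<Rightarrow> real^'n \<Rightarrow> real) \<Rightarrow> 'n \<Rightarrow> 'n \<Rightarrow> real^'n \<Rightarrow> real" where
  "tracefree g T i j x = T i j x - (1 / dimn TYPE('n)) * (\<Sum>k\<in>UNIV. \<Sum>l\<in>UNIV. ginv g x k l * T k l x) * g x i j"

type_synonym 'n trac = "real \<times> ('n \<Rightarrow> real) \<times> real"
type_synonym 'n tfield = "(real^'n \<Rightarrow> real) \<times> ('n \<Rightarrow> real^'n \<Rightarrow> real) \<times> (real^'n \<Rightarrow> real)"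

definition tval :: "'n tfield \<Rightarrow> real^'n \<Rightarrow> 'n trac" where
  "tval F x = (fst F x, \<lambda>b. fst (snd F) b x, snd (snd F) x)"

definition tadd :: "'n trac \<Rightarrow> 'n trac \<Rightarrow> 'n trac" where
  "tadd A B = (fst A + fst B, \<lambda>b. fst (snd A) b + fst (snd B) b, snd (snd A) + snd (snd B))"

definition tscale :: "real \<Rightarrow> 'n trac \<Rightarrow> 'n trac" where
  "tscale c A = (c * fst A, \<lambda>b. c * fst (snd A) b, c * snd (snd A))"

definition tzero :: "'n trac" where
  "tzero = (0, \<lambda>b. 0, 0)"

definition Xtr :: "'n trac" where
  "Xtr = (0, \<lambda>b. 0, 1)"

definition fscale :: "real \<Rightarrow> 'n tfield \<Rightarrow> 'n tfield" where
  "fscale c F = (\<lambda>x. c * fst F x, \<lambda>b x. c * fst (snd F) b x, \<lambda>x. c * snd (snd F) x)"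

definition tmet :: "(real^'n::finite \<Rightarrow> 'n \<Rightarrow> 'n \<Rightarrow> real) \<Rightarrow> real^'n \<Rightarrow> 'n trac \<Rightarrow> 'n trac \<Rightarrow> real" where
  "tmet g x A B = fst A * snd (snd B) + snd (snd A) * fst B
      + (\<Sum>a\<in>UNIV. \<Sum>b\<in>UNIV. g x a b * fst (snd A) a * fst (snd B) b)"

definition tconn :: "(real^'n::finite \<Rightarrow> 'n \<Rightarrow> 'n \<Rightarrow> real) \<Rightarrow> 'n tfield \<Rightarrow> 'n \<Rightarrow> real^'n \<Rightarrow> 'n trac" where
  "tconn g F a x =
     (pd a (fst F) x - (\<Sum>b\<in>UNIV. g x a b * fst (snd F) b x),
      \<lambda>b. pd a (fst (snd F) b) x + (\<Sum>c\<in>UNIV. chr g b a c x * fst (snd F) c x)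
           + fst F x * (\<Sum>c\<in>UNIV. ginv g x b c * schouten g a c x)
           + snd (snd F) x * (if a = b then 1 else 0),
      pd a (snd (snd F)) x - (\<Sum>b\<in>UNIV. schouten g a b x * fst (snd F) b x))"

text \<open>Tractor-D operator on densities of weight w (identified with functions in the scale g).\<close>
definition tractorD :: "(real^'n::finite \<Rightarrow> 'n \<Rightarrow> 'n \<Rightarrow> real) \<Rightarrow> real \<Rightarrow> (real^'n \<Rightarrow> real) \<Rightarrow> 'n tfield" where
  "tractorD g w u =
     (\<lambda>x. w * (dimn TYPE('n) + 2 * w - 2) * u x,
      \<lambda>b x. (dimn TYPE('n) + 2 * w - 2) * grad g u b x,
      \<lambda>x. - (lap g u x + w * Jfun g x * u x))"

end

theory Submission
  imports Defs
begin

text \<open>In the scale g the tractor I = (1/n) D u has slots (u, grad u, rho_u) with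
  rho_u = -(lap u + J u)/n, and nabla I has vanishing top slot. The trace-free equation says that
  the middle slot of (m+n-2) v nabla I - m u nabla J vanishes, while the other two equations read
  lam v^2 = -(m+n-1) v^2 <I,I> + m u v <I,J> and mu u^2 = -(m+n-2) u v <I,J> + (m-1) u^2 <J,J>.
  Differentiating the latter, using that the tractor connection preserves the tractor metric, and
  eliminating lam and mu yields both claimed identities multiplied by u v. Where u v vanishes the
  identities follow by continuity, or trivially on open sets where u or v vanishes identically.\<close>

section \<open>Partial derivatives\<close>

definition has_pd :: "'n::finite \<Rightarrow> (real^'n \<Rightarrow> real) \<Rightarrow> real^'n \<Rightarrow> real \<Rightarrow> bool" where
  "has_pd i f x D \<longleftrightarrow> ((\<lambda>t. f (x + t *\<^sub>R axis i 1)) has_field_derivative D) (at 0)"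

definition pd_differentiable :: "'n::finite \<Rightarrow> (real^'n \<Rightarrow> real) \<Rightarrow> real^'n \<Rightarrow> bool" where
  "pd_differentiable i f x \<longleftrightarrow> (\<lambda>t. f (x + t *\<^sub>R axis i 1)) differentiable (at 0)"

lemma has_pd_imp_pd: "has_pd i f x D \<Longrightarrow> pd i f x = D"
  unfolding has_pd_def pd_def by (rule DERIV_imp_deriv)

lemma has_pd_pd: "pd_differentiable i f x \<Longrightarrow> has_pd i f x (pd i f x)"
  unfolding has_pd_def pd_def pd_differentiable_def by (simp add: DERIV_deriv_iff_real_differentiable)

lemma has_pd_imp_pd_differentiable: "has_pd i f x D \<Longrightarrow> pd_differentiable i f x"
  unfolding has_pd_def pd_differentiable_def using real_differentiable_def by blast

lemma has_pd_const: "has_pd i (\<lambda>y. c) x 0"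
  unfolding has_pd_def by simp

lemma has_pd_add:
  "has_pd i f x A \<Longrightarrow> has_pd i g x B \<Longrightarrow> has_pd i (\<lambda>y. f y + g y) x (A + B)"
  unfolding has_pd_def by (rule DERIV_add)

lemma has_pd_mult:
  "has_pd i f x A \<Longrightarrow> has_pd i g x B \<Longrightarrow> has_pd i (\<lambda>y. f y * g y) x (A * g x + f x * B)"
  unfolding has_pd_def by (drule (1) DERIV_mult) (simp add: mult.commute)

lemma has_pd_inverse:
  "has_pd i f x A \<Longrightarrow> f x \<noteq> 0 \<Longrightarrow> has_pd i (\<lambda>y. 1 / f y) x (- A / (f x)\<^sup>2)"
  unfolding has_pd_def using DERIV_inverse'[of "\<lambda>t. f (x + t *\<^sub>R axis i 1)" A 0 UNIV]
  by (simp add: divide_inverse power2_eq_square mult_ac)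

lemma has_pd_sum:
  "finite S \<Longrightarrow> (\<And>k. k \<in> S \<Longrightarrow> has_pd i (f k) x (A k)) \<Longrightarrow>
   has_pd i (\<lambda>y. \<Sum>k\<in>S. f k y) x (\<Sum>k\<in>S. A k)"
  unfolding has_pd_def by (rule DERIV_sum)

lemma has_pd_power2: "has_pd i f x A \<Longrightarrow> has_pd i (\<lambda>y. (f y)\<^sup>2) x (2 * f x * A)"
  unfolding power2_eq_square using has_pd_mult[of i f x A f A] by (simp add: algebra_simps)

lemma eventually_line_in_open:
  fixes x :: "real^'n::finite"
  assumes "open U" "x \<in> U"
  shows "eventually (\<lambda>t. x + t *\<^sub>R axis i 1 \<in> U) (nhds (0::real))"
proof -
  have "open {t::real. x + t *\<^sub>R axis i 1 \<in> U}"
    using open_vimage[OF assms(1), of "\<lambda>t::real. x + t *\<^sub>R axis i 1"]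
    by (simp add: vimage_def continuous_intros)
  from eventually_nhds_in_open[OF this, of 0] show ?thesis using assms(2) by simp
qed

lemma has_pd_cong_open:
  assumes "open U" "x \<in> U" "\<And>y. y \<in> U \<Longrightarrow> f y = h y" "has_pd i f x D"
  shows "has_pd i h x D"
proof -
  have "eventually (\<lambda>t. f (x + t *\<^sub>R axis i 1) = h (x + t *\<^sub>R axis i 1)) (nhds 0)"
    using eventually_line_in_open[OF assms(1,2)] by eventually_elim (use assms(3) in auto)
  then show ?thesis
    using assms(4) unfolding has_pd_def by (simp add: DERIV_cong_ev)
qed

lemma pd_cong_open:
  assumes "open U" "x \<in> U" "\<And>y. y \<in> U \<Longrightarrow> f y = h y"
  shows "pd i f x = pd i h x"
proof -
  have "eventually (\<lambda>t. f (x + t *\<^sub>R axis i 1) = h (x + t *\<^sub>R axis i 1)) (nhds 0)"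
    using eventually_line_in_open[OF assms(1,2)] by eventually_elim (use assms(3) in auto)
  then show ?thesis unfolding pd_def by (rule deriv_cong_ev) simp
qed

lemma has_pd_unique_open:
  assumes "open U" "x \<in> U" "\<And>y. y \<in> U \<Longrightarrow> f y = h y" "has_pd i f x A" "has_pd i h x B"
  shows "A = B"
  using has_pd_imp_pd[OF has_pd_cong_open[OF assms(1-4)]] has_pd_imp_pd[OF assms(5)] by simp

lemma pd_const [simp]: "pd i (\<lambda>y. c) x = 0"
  by (rule has_pd_imp_pd, rule has_pd_const)

lemma pd_eq_0_open:
  assumes "open W" "x \<in> W" "\<And>y. y \<in> W \<Longrightarrow> f y = 0"
  shows "pd i f x = 0"
  using pd_cong_open[OF assms] by simp

section \<open>Smooth functions\<close>

coinductive smooth :: "(real^'n::finite) set \<Rightarrow> (real^'n \<Rightarrow> real) \<Rightarrow> bool" for U where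
  smoothI: "continuous_on U f \<Longrightarrow> (\<And>i x. x \<in> U \<Longrightarrow> pd_differentiable i f x) \<Longrightarrow>
    (\<And>i. smooth U (pd i f)) \<Longrightarrow> smooth U f"

text \<open>Coinduction up to this closure shows that smooth functions are closed under the ring
  operations and reciprocals.\<close>

inductive smooth_closure :: "(real^'n::finite) set \<Rightarrow> (real^'n \<Rightarrow> real) \<Rightarrow> bool" for U where
  "smooth U f \<Longrightarrow> smooth_closure U f"
| "smooth_closure U (\<lambda>y. c)"
| "smooth_closure U f \<Longrightarrow> smooth_closure U g \<Longrightarrow> smooth_closure U (\<lambda>y. f y + g y)"
| "smooth_closure U f \<Longrightarrow> smooth_closure U g \<Longrightarrow> smooth_closure U (\<lambda>y. f y * g y)"
| "smooth_closure U f \<Longrightarrow> (\<And>y. y \<in> U \<Longrightarrow> f y \<noteq> 0) \<Longrightarrow> smooth_closure U (\<lambda>y. 1 / f y)"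
| "smooth_closure U f \<Longrightarrow> (\<And>y. y \<in> U \<Longrightarrow> f y = h y) \<Longrightarrow> smooth_closure U h"

lemma smooth_closure_by_pd:
  assumes "continuous_on U h" "\<And>i y. y \<in> U \<Longrightarrow> has_pd i h y (D i y)"
    "\<And>i. smooth_closure U (D i)"
  shows "continuous_on U h \<and> (\<forall>i x. x \<in> U \<longrightarrow> pd_differentiable i h x)
    \<and> (\<forall>i. smooth_closure U (pd i h))"
proof (intro conjI allI impI)
  fix i
  have "D i y = pd i h y" if "y \<in> U" for y
    using has_pd_imp_pd[OF assms(2)[OF that]] by simp
  with assms(3)[of i] show "smooth_closure U (pd i h)"
    by (rule smooth_closure.intros(6))
qed (use assms has_pd_imp_pd_differentiable in blast)+

lemma smooth_closure_unfold:
  assumes U: "open U" and "smooth_closure U f"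
  shows "continuous_on U f \<and> (\<forall>i x. x \<in> U \<longrightarrow> pd_differentiable i f x)
    \<and> (\<forall>i. smooth_closure U (pd i f))"
  using assms(2)
proof induction
  case (1 f)
  then have "smooth U (pd i f)" for i by (auto elim: smooth.cases)
  with 1 show ?case by (auto elim: smooth.cases intro: smooth_closure.intros(1))
next
  case (2 c)
  then show ?case
    by (auto simp: pd_differentiable_def intro: smooth_closure.intros(2))
next
  case (3 f g)
  show ?case
  proof (rule smooth_closure_by_pd)
    show "has_pd i (\<lambda>y. f y + g y) y (pd i f y + pd i g y)" if "y \<in> U" for i y
      using 3 that by (blast intro: has_pd_add has_pd_pd)
  qed (use 3 in \<open>auto intro: continuous_on_add smooth_closure.intros(3)\<close>)
next
  case (4 f g)
  show ?case
  proof (rule smooth_closure_by_pd)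
    show "has_pd i (\<lambda>y. f y * g y) y (pd i f y * g y + f y * pd i g y)" if "y \<in> U" for i y
      using 4 that by (blast intro: has_pd_mult has_pd_pd)
    show "smooth_closure U (\<lambda>y. pd i f y * g y + f y * pd i g y)" for i
      using 4 by (intro smooth_closure.intros(3) smooth_closure.intros(4)) auto
  qed (use 4 in \<open>auto intro: continuous_on_mult\<close>)
next
  case (5 f)
  show ?case
  proof (rule smooth_closure_by_pd)
    show "has_pd i (\<lambda>y. 1 / f y) y (((-1) * pd i f y * (1 / f y)) * (1 / f y))" if "y \<in> U" for i y
      using has_pd_inverse[OF has_pd_pd, of i f y] 5 that by (simp add: power2_eq_square)
    show "smooth_closure U (\<lambda>y. ((-1) * pd i f y * (1 / f y)) * (1 / f y))" for i
      using 5 by (intro smooth_closure.intros(4) smooth_closure.intros(2) smooth_closure.intros(5)) auto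
  qed (use 5 in \<open>auto intro: continuous_on_divide\<close>)
next
  case (6 f h)
  show ?case
  proof (rule smooth_closure_by_pd)
    show "has_pd i h y (pd i f y)" if "y \<in> U" for i y
    proof -
      have "pd_differentiable i f y" using 6(3) that by blast
      then show ?thesis by (intro has_pd_cong_open[OF U that 6(2)] has_pd_pd)
    qed
    show "continuous_on U h"
      using 6(2,3) continuous_on_cong[of U U f h] by simp
    show "smooth_closure U (pd i f)" for i
      using 6(3) by simp
  qed
qed

lemma smooth_closure_imp_smooth:
  assumes "open U" "smooth_closure U f"
  shows "smooth U f"
  using assms(2)
  by (coinduction arbitrary: f rule: smooth.coinduct) (use smooth_closure_unfold[OF assms(1)] in blast)

lemma smooth_on_imp_smooth:
  assumes "smooth_on U f"
  shows "smooth U f"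
proof -
  have "smooth U (ipd is f)" for "is"
  proof (coinduction arbitrary: "is" rule: smooth.coinduct)
    case smooth
    have "pd i (ipd is f) = ipd (i # is) f" for i by simp
    then show ?case using assms unfolding smooth_on_def pd_differentiable_def by metis
  qed
  from this[of "[]"] show ?thesis by simp
qed

context
  fixes U :: "(real^'n::finite) set"
  assumes U: "open U"
begin

lemma smooth_const [simp, intro]: "smooth U (\<lambda>y. c)"
  by (rule smooth_closure_imp_smooth[OF U]) (rule smooth_closure.intros(2))

lemma smooth_add [intro]: "smooth U f \<Longrightarrow> smooth U g \<Longrightarrow> smooth U (\<lambda>y. f y + g y)"
  by (rule smooth_closure_imp_smooth[OF U]) (blast intro: smooth_closure.intros(1,3))

lemma smooth_mult [intro]: "smooth U f \<Longrightarrow> smooth U g \<Longrightarrow> smooth U (\<lambda>y. f y * g y)"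
  by (rule smooth_closure_imp_smooth[OF U]) (blast intro: smooth_closure.intros(1,4))

lemma smooth_cong: "smooth U f \<Longrightarrow> (\<And>y. y \<in> U \<Longrightarrow> f y = h y) \<Longrightarrow> smooth U h"
  by (rule smooth_closure_imp_smooth[OF U]) (blast intro: smooth_closure.intros(1,6))

lemma smooth_divide:
  assumes "smooth U f" "smooth U g" "\<And>y. y \<in> U \<Longrightarrow> g y \<noteq> 0"
  shows "smooth U (\<lambda>y. f y / g y)"
proof -
  have "smooth_closure U (\<lambda>y. f y * (1 / g y))"
    using assms by (intro smooth_closure.intros(4) smooth_closure.intros(5) smooth_closure.intros(1)) auto
  then show ?thesis by (simp add: smooth_closure_imp_smooth[OF U])
qed

lemma smooth_cdiv [intro]: "smooth U f \<Longrightarrow> smooth U (\<lambda>y. f y / c)"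
  using smooth_mult[of f "\<lambda>y. 1 / c"] by simp

lemma smooth_minus [intro]: "smooth U f \<Longrightarrow> smooth U (\<lambda>y. - f y)"
  using smooth_mult[of "\<lambda>y. -1" f] by simp

lemma smooth_diff [intro]: "smooth U f \<Longrightarrow> smooth U g \<Longrightarrow> smooth U (\<lambda>y. f y - g y)"
  using smooth_add[of f "\<lambda>y. - g y"] by auto

lemma smooth_sum [intro]:
  "finite S \<Longrightarrow> (\<And>k. k \<in> S \<Longrightarrow> smooth U (f k)) \<Longrightarrow> smooth U (\<lambda>y. \<Sum>k\<in>S. f k y)"
  by (induction S rule: finite_induct) auto

lemma smooth_prod [intro]:
  "finite S \<Longrightarrow> (\<And>k. k \<in> S \<Longrightarrow> smooth U (f k)) \<Longrightarrow> smooth U (\<lambda>y. \<Prod>k\<in>S. f k y)"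
  by (induction S rule: finite_induct) auto

lemma smooth_pd [intro]: "smooth U f \<Longrightarrow> smooth U (pd i f)"
  by (auto elim: smooth.cases)

lemma smooth_continuous_on: "smooth U f \<Longrightarrow> continuous_on U f"
  by (auto elim: smooth.cases)

lemma smooth_has_pd: "smooth U f \<Longrightarrow> x \<in> U \<Longrightarrow> has_pd i f x (pd i f x)"
  by (rule has_pd_pd) (auto elim: smooth.cases)

end

section \<open>The metric in a chart\<close>

lemma matrix_inv_mult:
  fixes A :: "real^'n::finite^'n"
  assumes "invertible A"
  shows "A ** matrix_inv A = mat 1" "matrix_inv A ** A = mat 1"
proof -
  from assms obtain B where "A ** B = mat 1 \<and> B ** A = mat 1" unfolding invertible_def by blast
  then have "A ** matrix_inv A = mat 1 \<and> matrix_inv A ** A = mat 1"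
    unfolding matrix_inv_def by (rule someI)
  then show "A ** matrix_inv A = mat 1" "matrix_inv A ** A = mat 1" by auto
qed

lemma matrix_inv_symmetric:
  fixes A :: "real^'n::finite^'n"
  assumes "invertible A" "transpose A = A"
  shows "transpose (matrix_inv A) = matrix_inv A"
proof -
  let ?B = "matrix_inv A"
  have left_inv: "transpose ?B ** A = mat 1"
    using matrix_inv_mult(1)[OF assms(1)] matrix_transpose_mul[of A ?B] assms(2)
    by (metis transpose_mat)
  have "transpose ?B = transpose ?B ** (A ** ?B)"
    using matrix_inv_mult(1)[OF assms(1)] by simp
  also have "\<dots> = ?B"
    using left_inv by (simp add: matrix_mul_assoc)
  finally show ?thesis .
qed

lemma matrix_inv_cramer:
  fixes A :: "real^'n::finite^'n"
  assumes "det A \<noteq> 0"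
  shows "matrix_inv A $ j $ k =
    det (\<chi> r s. if s = j then (if r = k then 1 else 0) else A $ r $ s) / det A"
proof -
  have inv: "invertible A" using assms invertible_det_nz by blast
  let ?x = "column k (matrix_inv A)"
  have "A *v ?x = column k (A ** matrix_inv A)"
    by (simp add: column_def matrix_vector_mult_def matrix_matrix_mult_def vec_eq_iff)
  also have "\<dots> = axis k 1"
    using matrix_inv_mult(1)[OF inv] by (simp add: column_def mat_def axis_def vec_eq_iff)
  finally have "?x = (\<chi> k'. det (\<chi> i j. if j = k' then axis k 1 $ i else A $ i $ j) / det A)"
    using cramer[OF assms] by blast
  then have "?x $ j = det (\<chi> i j'. if j' = j then axis k 1 $ i else A $ i $ j') / det A"
    by simp
  moreover have "(\<chi> i j'. if j' = j then axis k 1 $ i else A $ i $ j')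
      = (\<chi> r s. if s = j then (if r = k then 1 else 0) else A $ r $ s)"
    by (simp add: axis_def vec_eq_iff)
  ultimately show ?thesis by (simp add: column_def)
qed

lemma sum_delta: "(\<Sum>b\<in>UNIV. (if a = b then 1 else 0) * X b) = (X (a::'n::finite) :: real)"
  by (simp add: if_distrib[of "\<lambda>c. c * _"] cong: if_cong)

lemma sum_reverse3:
  "(\<Sum>b\<in>A. \<Sum>c\<in>B. \<Sum>e\<in>C. F b c e) = (\<Sum>e\<in>C. \<Sum>c\<in>B. \<Sum>b\<in>A. F b c e)"
proof -
  have "(\<Sum>b\<in>A. \<Sum>c\<in>B. \<Sum>e\<in>C. F b c e) = (\<Sum>c\<in>B. \<Sum>b\<in>A. \<Sum>e\<in>C. F b c e)"
    by (rule sum.swap)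
  also have "\<dots> = (\<Sum>c\<in>B. \<Sum>e\<in>C. \<Sum>b\<in>A. F b c e)"
    by (rule sum.cong[OF refl], rule sum.swap)
  also have "\<dots> = (\<Sum>e\<in>C. \<Sum>c\<in>B. \<Sum>b\<in>A. F b c e)"
    by (rule sum.swap)
  finally show ?thesis .
qed

locale riemannian_chart =
  fixes U :: "(real^'n::finite) set" and g :: "real^'n \<Rightarrow> 'n \<Rightarrow> 'n \<Rightarrow> real"
  assumes open_U: "open U" and metric: "riemannian_metric_on U g"
begin

lemmas smooth_rules = smooth_const[OF open_U] smooth_add[OF open_U] smooth_diff[OF open_U]
  smooth_minus[OF open_U] smooth_mult[OF open_U] smooth_sum[OF open_U] smooth_pd[OF open_U]
  smooth_cdiv[OF open_U]

lemma metric_smooth: "smooth U (\<lambda>y. g y i j)"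
  using metric smooth_on_imp_smooth unfolding riemannian_metric_on_def by blast

lemma metric_sym: "y \<in> U \<Longrightarrow> g y i j = g y j i"
  using metric unfolding riemannian_metric_on_def by blast

lemma pd_metric_sym: "x \<in> U \<Longrightarrow> pd a (\<lambda>y. g y i j) x = pd a (\<lambda>y. g y j i) x"
  by (rule pd_cong_open[OF open_U]) (auto intro: metric_sym)

definition metric_matrix :: "real^'n \<Rightarrow> real^'n^'n" where
  "metric_matrix y = (\<chi> i j. g y i j)"

lemma det_metric_matrix_nonzero:
  assumes y: "y \<in> U"
  shows "det (metric_matrix y) \<noteq> 0"
proof
  assume "det (metric_matrix y) = 0"
  then obtain d where d: "d \<noteq> 0" "metric_matrix y *v d = 0"
    using det_nz_iff_inj[of "(*v) (metric_matrix y)"] linear_injective_0[of "(*v) (metric_matrix y)"]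
    by (auto simp: matrix_vector_mul_linear)
  then have "(\<Sum>j\<in>UNIV. g y i j * d$j) = 0" for i
    by (simp add: matrix_vector_mult_def metric_matrix_def vec_eq_iff)
  then have "(\<Sum>i\<in>UNIV. d$i * (\<Sum>j\<in>UNIV. g y i j * d$j)) = 0"
    by simp
  then have "(\<Sum>i\<in>UNIV. \<Sum>j\<in>UNIV. g y i j * d$i * d$j) = 0"
    by (simp add: sum_distrib_left mult_ac)
  with metric y d(1) show False unfolding riemannian_metric_on_def by fastforce
qed

lemma invertible_metric_matrix: "y \<in> U \<Longrightarrow> invertible (metric_matrix y)"
  using det_metric_matrix_nonzero invertible_det_nz by blast

lemma ginv_eq: "ginv g y i j = matrix_inv (metric_matrix y) $ i $ j"
  by (simp add: ginv_def metric_matrix_def)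

lemma metric_ginv:
  assumes "y \<in> U"
  shows "(\<Sum>b\<in>UNIV. g y a b * ginv g y b c) = (if a = c then 1 else 0)"
proof -
  have "(metric_matrix y ** matrix_inv (metric_matrix y)) $ a $ c = mat 1 $ a $ c"
    using matrix_inv_mult(1)[OF invertible_metric_matrix[OF assms]] by simp
  then show ?thesis by (simp add: matrix_matrix_mult_def ginv_eq mat_def metric_matrix_def)
qed

lemma ginv_metric:
  assumes "y \<in> U"
  shows "(\<Sum>b\<in>UNIV. ginv g y a b * g y b c) = (if a = c then 1 else 0)"
proof -
  have "(matrix_inv (metric_matrix y) ** metric_matrix y) $ a $ c = mat 1 $ a $ c"
    using matrix_inv_mult(2)[OF invertible_metric_matrix[OF assms]] by simp
  then show ?thesis by (simp add: matrix_matrix_mult_def ginv_eq mat_def metric_matrix_def)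
qed

lemma ginv_sym:
  assumes "y \<in> U"
  shows "ginv g y a b = ginv g y b a"
proof -
  have "transpose (metric_matrix y) = metric_matrix y"
    using metric_sym[OF assms] by (simp add: transpose_def metric_matrix_def vec_eq_iff)
  then have "transpose (matrix_inv (metric_matrix y)) = matrix_inv (metric_matrix y)"
    using matrix_inv_symmetric invertible_metric_matrix[OF assms] by blast
  then show ?thesis
    by (metis ginv_eq transpose_def vec_lambda_beta)
qed

lemma smooth_det:
  assumes "\<And>r s. smooth U (\<lambda>y. M y $ r $ s)"
  shows "smooth U (\<lambda>y. det (M y :: real^'n^'n))"
  unfolding det_def by (intro smooth_rules smooth_prod[OF open_U] assms) auto

lemma ginv_smooth: "smooth U (\<lambda>y. ginv g y j k)"
proof (rule smooth_cong[OF open_U])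
  have entries: "smooth U (\<lambda>y. metric_matrix y $ r $ s)" for r s
    using metric_smooth by (simp add: metric_matrix_def)
  show "smooth U (\<lambda>y. det (\<chi> r s. if s = j then (if r = k then 1 else 0) else metric_matrix y $ r $ s)
    / det (metric_matrix y))"
  proof (intro smooth_divide[OF open_U] smooth_det)
    show "smooth U (\<lambda>y. (\<chi> r s. if s = j then (if r = k then 1 else 0) else metric_matrix y $ r $ s) $ r $ s)"
      for r s by (cases "s = j") (simp_all add: entries smooth_const[OF open_U])
  qed (use entries det_metric_matrix_nonzero in auto)
  show "det (\<chi> r s. if s = j then (if r = k then 1 else 0) else metric_matrix y $ r $ s)
    / det (metric_matrix y) = ginv g y j k" if "y \<in> U" for y
    using matrix_inv_cramer[OF det_metric_matrix_nonzero[OF that]] by (simp add: ginv_eq)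
qed

lemma metric_ginv_contract:
  assumes "y \<in> U"
  shows "(\<Sum>e\<in>UNIV. g y b e * (\<Sum>d\<in>UNIV. ginv g y e d * X d)) = X b"
proof -
  have "(\<Sum>e\<in>UNIV. g y b e * (\<Sum>d\<in>UNIV. ginv g y e d * X d))
      = (\<Sum>d\<in>UNIV. (\<Sum>e\<in>UNIV. g y b e * ginv g y e d) * X d)"
    by (simp add: sum_distrib_left sum_distrib_right mult_ac) (rule sum.swap)
  then show ?thesis by (simp add: metric_ginv[OF assms] sum_delta)
qed

lemma ginv_metric_contract:
  assumes "y \<in> U"
  shows "(\<Sum>e\<in>UNIV. ginv g y b e * (\<Sum>d\<in>UNIV. g y e d * X d)) = X b"
proof -
  have "(\<Sum>e\<in>UNIV. ginv g y b e * (\<Sum>d\<in>UNIV. g y e d * X d))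
      = (\<Sum>d\<in>UNIV. (\<Sum>e\<in>UNIV. ginv g y b e * g y e d) * X d)"
    by (simp add: sum_distrib_left sum_distrib_right mult_ac) (rule sum.swap)
  then show ?thesis by (simp add: ginv_metric[OF assms] sum_delta)
qed

lemma christoffel_lowered:
  assumes x: "x \<in> U"
  shows "(\<Sum>d\<in>UNIV. g x c d * chr g d a b x)
    = (pd a (\<lambda>y. g y b c) x + pd b (\<lambda>y. g y a c) x - pd c (\<lambda>y. g y a b) x) / 2"
  unfolding chr_def
  using metric_ginv_contract[OF x, of c
      "\<lambda>l. pd a (\<lambda>y. g y b l) x + pd b (\<lambda>y. g y a l) x - pd l (\<lambda>y. g y a b) x"]
  by (simp add: sum_distrib_left mult_ac flip: sum_divide_distrib)

lemma pd_metric: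
  assumes x: "x \<in> U"
  shows "pd a (\<lambda>y. g y b c) x
    = (\<Sum>d\<in>UNIV. g x d c * chr g d a b x) + (\<Sum>d\<in>UNIV. g x b d * chr g d a c x)"
  using christoffel_lowered[OF x, of c a b] christoffel_lowered[OF x, of b a c]
    metric_sym[OF x] pd_metric_sym[OF x, of a b c]
  by (simp add: field_simps)

end

section \<open>Tractor fields\<close>

definition tsmooth :: "(real^'n::finite) set \<Rightarrow> 'n tfield \<Rightarrow> bool" where
  "tsmooth U F \<longleftrightarrow> smooth U (fst F) \<and> (\<forall>b. smooth U (fst (snd F) b)) \<and> smooth U (snd (snd F))"

context riemannian_chart
begin

lemma christoffel_smooth: "smooth U (chr g k i j)"
  unfolding chr_def[abs_def] by (intro smooth_rules metric_smooth ginv_smooth) auto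

lemma ricci_smooth: "smooth U (ricci g i j)"
  unfolding ricci_def[abs_def] by (intro smooth_rules christoffel_smooth) auto

lemma schouten_smooth: "smooth U (schouten g i j)"
  unfolding schouten_def[abs_def] Jfun_def scal_def
  by (intro smooth_rules ricci_smooth ginv_smooth metric_smooth) auto

lemma Jfun_smooth: "smooth U (Jfun g)"
  unfolding Jfun_def[abs_def] scal_def by (intro smooth_rules ricci_smooth ginv_smooth) auto

lemma grad_smooth: "smooth U w \<Longrightarrow> smooth U (grad g w b)"
  unfolding grad_def[abs_def] by (intro smooth_rules ginv_smooth) auto

lemma lap_smooth: "smooth U w \<Longrightarrow> smooth U (lap g w)"
  unfolding lap_def[abs_def] hess_def by (intro smooth_rules ginv_smooth christoffel_smooth) auto

lemma tconn_bottom_smooth: "tsmooth U F \<Longrightarrow> smooth U (\<lambda>x. snd (snd (tconn g F a x)))"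
  unfolding tsmooth_def tconn_def by (auto intro!: smooth_rules schouten_smooth)

lemma tmet_tconn_smooth:
  "tsmooth U F \<Longrightarrow> tsmooth U G \<Longrightarrow> smooth U (\<lambda>x. tmet g x (tconn g F a x) (tval G x))"
  unfolding tsmooth_def tmet_def tconn_def tval_def
  by (auto intro!: smooth_rules metric_smooth ginv_smooth christoffel_smooth schouten_smooth)

lemma tmet_smooth:
  "tsmooth U F \<Longrightarrow> tsmooth U G \<Longrightarrow> smooth U (\<lambda>x. tmet g x (tval F x) (tval G x))"
  unfolding tsmooth_def tmet_def tval_def by (auto intro!: smooth_rules metric_smooth)

lemma christoffel_pairing:
  assumes x: "x \<in> U"
  shows "(\<Sum>b\<in>UNIV. \<Sum>c\<in>UNIV. pd a (\<lambda>y. g y b c) x * X b * Y c)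
    = (\<Sum>b\<in>UNIV. \<Sum>c\<in>UNIV. g x b c * (\<Sum>e\<in>UNIV. chr g b a e x * X e) * Y c)
    + (\<Sum>b\<in>UNIV. \<Sum>c\<in>UNIV. g x b c * X b * (\<Sum>e\<in>UNIV. chr g c a e x * Y e))"
proof -
  have first: "(\<Sum>b\<in>UNIV. \<Sum>c\<in>UNIV. (\<Sum>d\<in>UNIV. g x d c * chr g d a b x) * X b * Y c)
      = (\<Sum>b\<in>UNIV. \<Sum>c\<in>UNIV. g x b c * (\<Sum>e\<in>UNIV. chr g b a e x * X e) * Y c)"
    (is "?L = ?R")
  proof -
    have "?L = (\<Sum>b\<in>UNIV. \<Sum>c\<in>UNIV. \<Sum>d\<in>UNIV. g x d c * chr g d a b x * X b * Y c)"
      by (simp add: sum_distrib_right)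
    also have "\<dots> = (\<Sum>d\<in>UNIV. \<Sum>c\<in>UNIV. \<Sum>b\<in>UNIV. g x d c * chr g d a b x * X b * Y c)"
      by (rule sum_reverse3)
    also have "\<dots> = ?R"
      by (simp add: sum_distrib_left sum_distrib_right mult_ac)
    finally show ?thesis .
  qed
  have second: "(\<Sum>b\<in>UNIV. \<Sum>c\<in>UNIV. (\<Sum>d\<in>UNIV. g x b d * chr g d a c x) * X b * Y c)
      = (\<Sum>b\<in>UNIV. \<Sum>c\<in>UNIV. g x b c * X b * (\<Sum>e\<in>UNIV. chr g c a e x * Y e))"
    (is "?L = ?R")
  proof -
    have "?L = (\<Sum>b\<in>UNIV. \<Sum>c\<in>UNIV. \<Sum>d\<in>UNIV. g x b d * chr g d a c x * X b * Y c)"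
      by (simp add: sum_distrib_right)
    also have "\<dots> = (\<Sum>b\<in>UNIV. \<Sum>d\<in>UNIV. \<Sum>c\<in>UNIV. g x b d * chr g d a c x * X b * Y c)"
      by (rule sum.cong[OF refl], rule sum.swap)
    also have "\<dots> = ?R"
      by (simp add: sum_distrib_left sum_distrib_right mult_ac)
    finally show ?thesis .
  qed
  show ?thesis
    unfolding pd_metric[OF x] first[symmetric] second[symmetric]
    by (simp add: distrib_right sum.distrib)
qed

lemma metric_pairing_sym:
  assumes "x \<in> U"
  shows "(\<Sum>b\<in>UNIV. \<Sum>c\<in>UNIV. g x b c * X b * Y c) = (\<Sum>b\<in>UNIV. \<Sum>c\<in>UNIV. g x b c * Y b * X c)"
  by (subst sum.swap) (simp add: metric_sym[OF assms] mult_ac)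

lemma tmet_tconn:
  assumes x: "x \<in> U"
  shows "tmet g x (tconn g F a x) K =
    (pd a (fst F) x - (\<Sum>b\<in>UNIV. g x a b * fst (snd F) b x)) * snd (snd K)
    + (pd a (snd (snd F)) x - (\<Sum>b\<in>UNIV. schouten g a b x * fst (snd F) b x)) * fst K
    + (\<Sum>b\<in>UNIV. \<Sum>c\<in>UNIV. g x b c * pd a (fst (snd F) b) x * fst (snd K) c)
    + (\<Sum>b\<in>UNIV. \<Sum>c\<in>UNIV. g x b c * (\<Sum>e\<in>UNIV. chr g b a e x * fst (snd F) e x) * fst (snd K) c)
    + fst F x * (\<Sum>c\<in>UNIV. schouten g a c x * fst (snd K) c)
    + snd (snd F) x * (\<Sum>c\<in>UNIV. g x a c * fst (snd K) c)"
proof -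
  define k where "k c = fst (snd K) c" for c
  have P: "(\<Sum>b\<in>UNIV. \<Sum>c\<in>UNIV. g x b c * (fst F x * (\<Sum>e\<in>UNIV. ginv g x b e * schouten g a e x)) * k c)
      = fst F x * (\<Sum>c\<in>UNIV. schouten g a c x * k c)"
  proof -
    have "(\<Sum>b\<in>UNIV. \<Sum>c\<in>UNIV. g x b c * (fst F x * (\<Sum>e\<in>UNIV. ginv g x b e * schouten g a e x)) * k c)
        = fst F x * (\<Sum>c\<in>UNIV. (\<Sum>b\<in>UNIV. g x c b * (\<Sum>e\<in>UNIV. ginv g x b e * schouten g a e x)) * k c)"
      by (subst sum.swap) (simp add: metric_sym[OF x] sum_distrib_left sum_distrib_right mult_ac)
    then show ?thesis by (simp add: metric_ginv_contract[OF x])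
  qed
  have R: "(\<Sum>b\<in>UNIV. \<Sum>c\<in>UNIV. g x b c * (snd (snd F) x * (if a = b then 1 else 0)) * k c)
      = snd (snd F) x * (\<Sum>c\<in>UNIV. g x a c * k c)"
  proof -
    have "(\<Sum>b\<in>UNIV. \<Sum>c\<in>UNIV. g x b c * (snd (snd F) x * (if a = b then 1 else 0)) * k c)
        = (\<Sum>b\<in>UNIV. if a = b then \<Sum>c\<in>UNIV. g x b c * snd (snd F) x * k c else 0)"
      by (rule sum.cong[OF refl]) (simp add: mult_ac)
    then show ?thesis by (simp add: sum_distrib_left mult_ac)
  qed
  have mid: "(\<Sum>b\<in>UNIV. \<Sum>c\<in>UNIV. g x b c * (pd a (fst (snd F) b) x
        + (\<Sum>e\<in>UNIV. chr g b a e x * fst (snd F) e x)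
        + fst F x * (\<Sum>e\<in>UNIV. ginv g x b e * schouten g a e x)
        + snd (snd F) x * (if a = b then 1 else 0)) * k c)
    = (\<Sum>b\<in>UNIV. \<Sum>c\<in>UNIV. g x b c * pd a (fst (snd F) b) x * k c)
      + (\<Sum>b\<in>UNIV. \<Sum>c\<in>UNIV. g x b c * (\<Sum>e\<in>UNIV. chr g b a e x * fst (snd F) e x) * k c)
      + (\<Sum>b\<in>UNIV. \<Sum>c\<in>UNIV. g x b c * (fst F x * (\<Sum>e\<in>UNIV. ginv g x b e * schouten g a e x)) * k c)
      + (\<Sum>b\<in>UNIV. \<Sum>c\<in>UNIV. g x b c * (snd (snd F) x * (if a = b then 1 else 0)) * k c)"
    by (simp only: distrib_left distrib_right sum.distrib)
  show ?thesis
    unfolding tmet_def tconn_def fst_conv snd_conv k_def[symmetric] mid P R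
    by (simp add: algebra_simps)
qed

lemma has_pd_tmet:
  assumes x: "x \<in> U" and F: "tsmooth U F" and G: "tsmooth U G"
  shows "has_pd a (\<lambda>y. tmet g y (tval F y) (tval G y)) x
    (tmet g x (tconn g F a x) (tval G x) + tmet g x (tconn g G a x) (tval F x))"
proof -
  obtain s w r where F_def: "F = (s, w, r)" by (cases F) auto
  obtain s' w' r' where G_def: "G = (s', w', r')" by (cases G) auto
  have sm: "smooth U s" "smooth U r" "smooth U (w b)" "smooth U s'" "smooth U r'" "smooth U (w' b)" for b
    using F G by (auto simp: tsmooth_def F_def G_def)
  have "has_pd a (\<lambda>y. tmet g y (tval F y) (tval G y)) x
     ((pd a s x * r' x + s x * pd a r' x) + (pd a r x * s' x + r x * pd a s' x)
      + (\<Sum>b\<in>UNIV. \<Sum>c\<in>UNIV. (pd a (\<lambda>y. g y b c) x * w b x + g x b c * pd a (w b) x) * w' c x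
          + g x b c * w b x * pd a (w' c) x))"
    unfolding tmet_def tval_def F_def G_def fst_conv snd_conv
    by (intro has_pd_add has_pd_mult has_pd_sum smooth_has_pd[OF open_U _ x] sm metric_smooth) auto
  then have D: "has_pd a (\<lambda>y. tmet g y (tval F y) (tval G y)) x
     (pd a s x * r' x + s x * pd a r' x + (pd a r x * s' x + r x * pd a s' x)
      + (\<Sum>b\<in>UNIV. \<Sum>c\<in>UNIV. pd a (\<lambda>y. g y b c) x * w b x * w' c x)
      + (\<Sum>b\<in>UNIV. \<Sum>c\<in>UNIV. g x b c * pd a (w b) x * w' c x)
      + (\<Sum>b\<in>UNIV. \<Sum>c\<in>UNIV. g x b c * w b x * pd a (w' c) x))"
    by (simp add: distrib_right sum.distrib add.assoc)
  show ?thesis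
    using D
    unfolding tmet_tconn[OF x] christoffel_pairing[OF x]
    unfolding tval_def F_def G_def fst_conv snd_conv
    using metric_pairing_sym[OF x, of "\<lambda>b. pd a (w' b) x" "\<lambda>c. w c x"]
      metric_pairing_sym[OF x, of "\<lambda>b. \<Sum>e\<in>UNIV. chr g b a e x * w' e x" "\<lambda>c. w c x"]
    by (simp add: algebra_simps)
qed

lemma tmet_lincomb_top_zero:
  assumes "fst A = 0" "fst B = 0" "\<And>b. c * fst (snd A) b + d * fst (snd B) b = 0"
  shows "c * tmet g x A K + d * tmet g x B K = (c * snd (snd A) + d * snd (snd B)) * fst K"
proof -
  have "c * (\<Sum>i\<in>UNIV. \<Sum>j\<in>UNIV. g x i j * fst (snd A) i * fst (snd K) j)
      + d * (\<Sum>i\<in>UNIV. \<Sum>j\<in>UNIV. g x i j * fst (snd B) i * fst (snd K) j)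
      = (\<Sum>i\<in>UNIV. \<Sum>j\<in>UNIV. g x i j * (c * fst (snd A) i + d * fst (snd B) i) * fst (snd K) j)"
    by (simp add: sum_distrib_left algebra_simps sum.distrib)
  also have "\<dots> = 0" using assms(3) by simp
  finally show ?thesis using assms(1,2) unfolding tmet_def by (simp add: algebra_simps)
qed

end

definition scale_rho ::
    "(real^'n::finite \<Rightarrow> 'n \<Rightarrow> 'n \<Rightarrow> real) \<Rightarrow> (real^'n \<Rightarrow> real) \<Rightarrow> real^'n \<Rightarrow> real" where
  "scale_rho g w x = - (lap g w x + Jfun g x * w x) / real CARD('n)"

definition scale_tractor ::
    "(real^'n::finite \<Rightarrow> 'n \<Rightarrow> 'n \<Rightarrow> real) \<Rightarrow> (real^'n \<Rightarrow> real) \<Rightarrow> 'n tfield" where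
  "scale_tractor g w = (w, grad g w, scale_rho g w)"

lemma fscale_tractorD:
  "fscale (1 / real CARD('n)) (tractorD g 1 w) = scale_tractor g (w :: real^'n::finite \<Rightarrow> real)"
  by (simp add: fscale_def tractorD_def scale_tractor_def scale_rho_def dimn_def fun_eq_iff)

lemma tval_scale_tractor: "tval (scale_tractor g w) x = (w x, \<lambda>b. grad g w b x, scale_rho g w x)"
  by (simp add: tval_def scale_tractor_def)

lemma tval_scale_tractor_top: "fst (tval (scale_tractor g w) x) = w x"
  by (simp add: tval_scale_tractor)

lemma tmet_X_scale_tractor: "tmet g x Xtr (tval (scale_tractor g w) x) = w x"
  by (simp add: tmet_def Xtr_def tval_scale_tractor)

lemma tconn_eq_tzero_open:
  assumes "open W" "x \<in> W" "\<And>y. y \<in> W \<Longrightarrow> tval F y = tzero"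
  shows "tconn g F a x = tzero"
proof -
  have zero: "fst F y = 0" "fst (snd F) b y = 0" "snd (snd F) y = 0" if "y \<in> W" for y b
    using assms(3)[OF that] by (auto simp: tval_def tzero_def fun_eq_iff)
  have "pd a (fst F) x = 0" "pd a (fst (snd F) b) x = 0" "pd a (snd (snd F)) x = 0" for b
    using zero by (auto intro: pd_eq_0_open[OF assms(1,2)])
  then show ?thesis using zero assms(2) by (simp add: tconn_def tzero_def)
qed

lemma scale_tractor_eq_tzero_open:
  assumes "open W" "y \<in> W" "\<And>z. z \<in> W \<Longrightarrow> w z = 0"
  shows "tval (scale_tractor g w) y = tzero"
proof -
  have d1: "pd i w z = 0" if "z \<in> W" for i z
    using pd_eq_0_open[OF assms(1) that assms(3)] .
  have d2: "pd i (pd j w) z = 0" if "z \<in> W" for i j z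
    using pd_eq_0_open[OF assms(1) that d1] .
  show ?thesis
    using assms(2,3) d1 d2
    by (simp add: tval_scale_tractor tzero_def scale_rho_def lap_def hess_def grad_def)
qed

context riemannian_chart
begin

lemma tsmooth_scale_tractor: "smooth U w \<Longrightarrow> tsmooth U (scale_tractor g w)"
  unfolding tsmooth_def scale_tractor_def scale_rho_def[abs_def]
  by (auto intro!: smooth_rules grad_smooth lap_smooth Jfun_smooth)

lemma tmet_scale_tractor:
  assumes x: "x \<in> U"
  shows "tmet g x (tval (scale_tractor g w) x) (tval (scale_tractor g w') x)
    = w x * scale_rho g w' x + scale_rho g w x * w' x + ginner g w w' x"
proof -
  have "(\<Sum>a\<in>UNIV. \<Sum>b\<in>UNIV. g x a b * grad g w a x * grad g w' b x)
      = (\<Sum>a\<in>UNIV. grad g w a x * (\<Sum>b\<in>UNIV. g x a b * (\<Sum>c\<in>UNIV. ginv g x b c * pd c w' x)))"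
    by (simp add: grad_def[of g w'] sum_distrib_left mult_ac)
  also have "\<dots> = (\<Sum>a\<in>UNIV. \<Sum>c\<in>UNIV. ginv g x a c * pd c w x * pd a w' x)"
    by (simp add: metric_ginv_contract[OF x] grad_def sum_distrib_right)
  also have "\<dots> = ginner g w w' x"
    unfolding ginner_def by (subst sum.swap) (simp add: ginv_sym[OF x] mult_ac)
  finally show ?thesis
    by (simp add: tmet_def tval_scale_tractor)
qed

lemma tconn_scale_tractor_top:
  assumes x: "x \<in> U"
  shows "fst (tconn g (scale_tractor g w) a x) = 0"
  using metric_ginv_contract[OF x, of a "\<lambda>c. pd c w x"]
  by (simp add: tconn_def scale_tractor_def grad_def)

lemma pd_grad_lowered:
  assumes x: "x \<in> U" and w: "smooth U w"
  shows "(\<Sum>b\<in>UNIV. g x d b * pd a (grad g w b) x)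
    = pd a (pd d w) x - (\<Sum>e\<in>UNIV. chr g e a d x * pd e w x)
      - (\<Sum>b\<in>UNIV. g x d b * (\<Sum>c\<in>UNIV. chr g b a c x * grad g w c x))"
proof -
  have lowered: "(\<Sum>b\<in>UNIV. g y d b * grad g w b y) = pd d w y" if "y \<in> U" for y
    using metric_ginv_contract[OF that, of d "\<lambda>c. pd c w y"] by (simp add: grad_def)
  have product_rule: "has_pd a (\<lambda>y. \<Sum>b\<in>UNIV. g y d b * grad g w b y) x
      (\<Sum>b\<in>UNIV. pd a (\<lambda>y. g y d b) x * grad g w b x + g x d b * pd a (grad g w b) x)"
    by (intro has_pd_sum has_pd_mult smooth_has_pd[OF open_U _ x] metric_smooth grad_smooth w) auto
  have "has_pd a (pd d w) x
      (\<Sum>b\<in>UNIV. pd a (\<lambda>y. g y d b) x * grad g w b x + g x d b * pd a (grad g w b) x)"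
    by (rule has_pd_cong_open[OF open_U x _ product_rule]) (rule lowered)
  then have "pd a (pd d w) x
      = (\<Sum>b\<in>UNIV. pd a (\<lambda>y. g y d b) x * grad g w b x) + (\<Sum>b\<in>UNIV. g x d b * pd a (grad g w b) x)"
    by (simp add: has_pd_imp_pd sum.distrib)
  moreover have "(\<Sum>b\<in>UNIV. pd a (\<lambda>y. g y d b) x * grad g w b x)
      = (\<Sum>e\<in>UNIV. chr g e a d x * (\<Sum>b\<in>UNIV. g x e b * grad g w b x))
        + (\<Sum>e\<in>UNIV. g x d e * (\<Sum>b\<in>UNIV. chr g e a b x * grad g w b x))"
  proof -
    have "(\<Sum>b\<in>UNIV. (\<Sum>e\<in>UNIV. g x e b * chr g e a d x) * grad g w b x)
        = (\<Sum>e\<in>UNIV. chr g e a d x * (\<Sum>b\<in>UNIV. g x e b * grad g w b x))"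
      by (simp add: sum_distrib_left sum_distrib_right mult_ac) (rule sum.swap)
    moreover have "(\<Sum>b\<in>UNIV. (\<Sum>e\<in>UNIV. g x d e * chr g e a b x) * grad g w b x)
        = (\<Sum>e\<in>UNIV. g x d e * (\<Sum>b\<in>UNIV. chr g e a b x * grad g w b x))"
      by (simp add: sum_distrib_left sum_distrib_right mult_ac) (rule sum.swap)
    ultimately show ?thesis
      unfolding pd_metric[OF x] distrib_right sum.distrib by simp
  qed
  moreover have "(\<Sum>b\<in>UNIV. g x e b * grad g w b x) = pd e w x" for e
    using metric_ginv_contract[OF x, of e "\<lambda>c. pd c w x"] by (simp add: grad_def)
  ultimately show ?thesis by simp
qed

lemma tconn_scale_tractor_middle:
  assumes x: "x \<in> U" and w: "smooth U w"
  shows "(\<Sum>b\<in>UNIV. g x d b * fst (snd (tconn g (scale_tractor g w) a x)) b)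
    = hess g w a d x + w x * schouten g a d x + scale_rho g w x * g x a d"
proof -
  have "(\<Sum>b\<in>UNIV. g x d b * fst (snd (tconn g (scale_tractor g w) a x)) b)
      = (\<Sum>b\<in>UNIV. g x d b * pd a (grad g w b) x)
        + (\<Sum>b\<in>UNIV. g x d b * (\<Sum>c\<in>UNIV. chr g b a c x * grad g w c x))
        + w x * (\<Sum>b\<in>UNIV. g x d b * (\<Sum>c\<in>UNIV. ginv g x b c * schouten g a c x))
        + scale_rho g w x * (\<Sum>b\<in>UNIV. (if a = b then 1 else 0) * g x d b)"
    by (simp add: tconn_def scale_tractor_def distrib_left sum.distrib sum_distrib_left mult_ac)
  then show ?thesis
    by (simp add: pd_grad_lowered[OF x w] metric_ginv_contract[OF x] sum_delta metric_sym[OF x, of d a]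
        hess_def)
qed

end

section \<open>Quasi-Einstein pairs\<close>

lemma vanishes_by_density:
  fixes f u v :: "'a::topological_space \<Rightarrow> real"
  assumes U: "open U" and f: "continuous_on U f" and u: "continuous_on U u"
    and nonzero: "\<And>x. x \<in> U \<Longrightarrow> u x \<noteq> 0 \<Longrightarrow> v x \<noteq> 0 \<Longrightarrow> f x = 0"
    and u_zero: "\<And>W x. open W \<Longrightarrow> W \<subseteq> U \<Longrightarrow> x \<in> W \<Longrightarrow> (\<forall>y\<in>W. u y = 0) \<Longrightarrow> f x = 0"
    and v_zero: "\<And>W x. open W \<Longrightarrow> W \<subseteq> U \<Longrightarrow> x \<in> W \<Longrightarrow> (\<forall>y\<in>W. v y = 0) \<Longrightarrow> f x = 0"
    and x: "x \<in> U"
  shows "f x = 0"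
proof (rule ccontr)
  assume fx: "f x \<noteq> 0"
  define W where "W = U \<inter> f -` (- {0})"
  have W: "open W" "W \<subseteq> U" "x \<in> W"
    using continuous_open_preimage[OF f U, of "- {0}"] fx x by (auto simp: W_def)
  then obtain y where y: "y \<in> W" "u y \<noteq> 0"
    using u_zero fx by blast
  define W' where "W' = W \<inter> u -` (- {0})"
  have W': "open W'" "W' \<subseteq> U" "y \<in> W'"
    using continuous_open_preimage[OF continuous_on_subset[OF u \<open>W \<subseteq> U\<close>] \<open>open W\<close>, of "- {0}"] W y
    by (auto simp: W'_def)
  have "\<forall>z\<in>W'. v z = 0"
    using nonzero W' by (auto simp: W'_def W_def)
  then have "f y = 0" using v_zero W' by blast
  then show False using y by (simp add: W_def)
qed

text \<open>Here ii, ij, jj are the pairings of I, J among themselves, nii, nij, nji, njj the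
  pairings of nabla I and nabla J with I and J, b the bottom slot of (m+n-2) v nabla I - m u nabla J.
  The hypotheses are the middle-slot relation and the equations defining lam and mu together
  with their derivatives.\<close>

lemma quasi_einstein_algebra:
  fixes u v du dv ii ij jj nii nij nji njj b lam mu m n :: real
  assumes "(m+n-2) * v * nii - m * u * nji = b * u" "(m+n-2) * v * nij - m * u * njj = b * v"
    and "lam * v^2 = -(m+n-1) * v^2 * ii + m * u * v * ij"
    and "2 * lam * v * dv = -(m+n-1) * (2 * v * dv * ii + v^2 * (2 * nii))
      + m * ((du * v + u * dv) * ij + u * v * (nij + nji))"
    and "mu * u^2 = -(m+n-2) * u * v * ij + (m-1) * u^2 * jj"
    and "2 * mu * u * du = -(m+n-2) * ((du * v + u * dv) * ij + u * v * (nij + nji))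
      + (m-1) * (2 * u * du * jj + u^2 * (2 * njj))"
  shows "u * v * (n * b - (m+n-2) * nij + m * nji) = 0"
    and "u * v * (m * n * (m+n-2) * ij * (v * du - u * dv) - m * (m+n-2) * (2 * m+n-2) * u * v * (nij+nji)
      + 2 * (m-1) * (m+n-1) * (m+n-2) * u * v * nij + 2 * m * (m-1) * (m+n-1) * u * v * nji) = 0"
  using assms by algebra+

locale quasi_einstein_chart = riemannian_chart U g for U :: "(real^'n::finite) set" and g +
  fixes u v :: "real^'n \<Rightarrow> real" and m lam mu :: real
  assumes dim: "CARD('n) \<ge> 3"
    and u_smooth: "smooth U u" and v_smooth: "smooth U v"
    and eq1: "\<forall>x\<in>U. \<forall>i j. tracefree g
               (\<lambda>i j y. u y * v y * ricci g i j y + (m + real CARD('n) - 2) * v y * hess g u i j y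
                        - m * u y * hess g v i j y) i j x = 0"
    and eq2: "\<forall>x\<in>U. real CARD('n) * lam * (v x)\<^sup>2 =
               (u x * v x)\<^sup>2 * scal g x + (m + 2 * real CARD('n) - 2) * u x * (v x)\<^sup>2 * lap g u x
               - m * (u x)\<^sup>2 * v x * lap g v x
               - (m + real CARD('n) - 1) * real CARD('n) * (v x)\<^sup>2 * ginner g u u x
               + m * real CARD('n) * u x * v x * ginner g u v x"
    and eq3: "\<forall>x\<in>U. real CARD('n) * mu * (u x)\<^sup>2 =
               (u x * v x)\<^sup>2 * scal g x + (m + real CARD('n) - 2) * u x * (v x)\<^sup>2 * lap g u x
               - (m - real CARD('n)) * (u x)\<^sup>2 * v x * lap g v x
               - (m + real CARD('n) - 2) * real CARD('n) * u x * v x * ginner g u v x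
               + real CARD('n) * (m - 1) * (u x)\<^sup>2 * ginner g v v x"
begin

abbreviation I :: "'n tfield" where "I \<equiv> scale_tractor g u"
abbreviation J :: "'n tfield" where "J \<equiv> scale_tractor g v"

lemma dim_facts: "real CARD('n) \<noteq> 0" "real CARD('n) - 1 \<noteq> 0" "real CARD('n) - 2 \<noteq> 0"
  using dim by auto

lemma scal_Jfun: "scal g x = 2 * (real CARD('n) - 1) * Jfun g x"
  using dim_facts by (simp add: Jfun_def dimn_def)

lemma ricci_schouten: "ricci g i j x = (real CARD('n) - 2) * schouten g i j x + Jfun g x * g x i j"
  using dim_facts by (simp add: schouten_def dimn_def)

lemma eq2_tractor:
  assumes y: "y \<in> U"
  shows "lam * (v y)\<^sup>2 =
    - (m + real CARD('n) - 1) * (v y)\<^sup>2 * tmet g y (tval I y) (tval I y)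
    + m * u y * v y * tmet g y (tval I y) (tval J y)"
proof -
  have "real CARD('n) * lam * (v y)\<^sup>2 =
               (u y * v y)\<^sup>2 * scal g y + (m + 2 * real CARD('n) - 2) * u y * (v y)\<^sup>2 * lap g u y
               - m * (u y)\<^sup>2 * v y * lap g v y
               - (m + real CARD('n) - 1) * real CARD('n) * (v y)\<^sup>2 * ginner g u u y
               + m * real CARD('n) * u y * v y * ginner g u v y"
    using eq2 y by blast
  then show ?thesis
    using dim_facts(1) unfolding tmet_scale_tractor[OF y] scale_rho_def scal_Jfun
    by (simp add: field_simps) algebra
qed

lemma eq3_tractor:
  assumes y: "y \<in> U"
  shows "mu * (u y)\<^sup>2 =
    - (m + real CARD('n) - 2) * u y * v y * tmet g y (tval I y) (tval J y)
    + (m - 1) * (u y)\<^sup>2 * tmet g y (tval J y) (tval J y)"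
proof -
  have "real CARD('n) * mu * (u y)\<^sup>2 =
               (u y * v y)\<^sup>2 * scal g y + (m + real CARD('n) - 2) * u y * (v y)\<^sup>2 * lap g u y
               - (m - real CARD('n)) * (u y)\<^sup>2 * v y * lap g v y
               - (m + real CARD('n) - 2) * real CARD('n) * u y * v y * ginner g u v y
               + real CARD('n) * (m - 1) * (u y)\<^sup>2 * ginner g v v y"
    using eq3 y by blast
  then show ?thesis
    using dim_facts(1) unfolding tmet_scale_tractor[OF y] scale_rho_def scal_Jfun
    by (simp add: field_simps) algebra
qed

lemma trace_eq1:
  "(\<Sum>k\<in>UNIV. \<Sum>l\<in>UNIV. ginv g x k l * (u x * v x * ricci g k l x
      + (m + real CARD('n) - 2) * v x * hess g u k l x - m * u x * hess g v k l x))
    = u x * v x * scal g x + (m + real CARD('n) - 2) * v x * lap g u x - m * u x * lap g v x"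
  unfolding scal_def lap_def
  by (simp add: algebra_simps sum.distrib sum_subtractf sum_distrib_left)

lemma middle_relation_lowered:
  assumes x: "x \<in> U"
  shows "(m + real CARD('n) - 2) * v x * (hess g u a d x + u x * schouten g a d x + scale_rho g u x * g x a d)
    - m * u x * (hess g v a d x + v x * schouten g a d x + scale_rho g v x * g x a d) = 0"
proof -
  have "tracefree g (\<lambda>i j y. u y * v y * ricci g i j y + (m + real CARD('n) - 2) * v y * hess g u i j y
                        - m * u y * hess g v i j y) a d x = 0"
    using eq1 x by blast
  then show ?thesis
    using dim_facts(1)
    unfolding tracefree_def trace_eq1 dimn_def
    unfolding ricci_schouten scal_Jfun scale_rho_def
    by (simp add: field_simps) algebra
qed

lemma middle_relation:
  assumes x: "x \<in> U"
  shows "(m + real CARD('n) - 2) * v x * fst (snd (tconn g I a x)) b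
    - m * u x * fst (snd (tconn g J a x)) b = 0"
proof -
  define z where "z b = (m + real CARD('n) - 2) * v x * fst (snd (tconn g I a x)) b
    - m * u x * fst (snd (tconn g J a x)) b" for b
  have "(\<Sum>b\<in>UNIV. g x d b * z b)
      = (m + real CARD('n) - 2) * v x * (\<Sum>b\<in>UNIV. g x d b * fst (snd (tconn g I a x)) b)
        - m * u x * (\<Sum>b\<in>UNIV. g x d b * fst (snd (tconn g J a x)) b)" for d
    by (simp add: z_def sum_distrib_left algebra_simps sum.distrib sum_subtractf)
  then have "(\<Sum>b\<in>UNIV. g x d b * z b) = 0" for d
    using middle_relation_lowered[OF x, of a d]
    by (simp add: tconn_scale_tractor_middle[OF x u_smooth] tconn_scale_tractor_middle[OF x v_smooth])
  then have "z b = 0"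
    using ginv_metric_contract[OF x, of b z] by simp
  then show ?thesis unfolding z_def .
qed

lemma pairing_relation:
  assumes x: "x \<in> U"
  shows "(m + real CARD('n) - 2) * v x * tmet g x (tconn g I a x) K - m * u x * tmet g x (tconn g J a x) K
    = ((m + real CARD('n) - 2) * v x * snd (snd (tconn g I a x)) - m * u x * snd (snd (tconn g J a x)))
      * fst K"
  using tmet_lincomb_top_zero[of "tconn g I a x" "tconn g J a x" "(m + real CARD('n) - 2) * v x" "- m * u x"]
    tconn_scale_tractor_top[OF x] middle_relation[OF x]
  by simp

lemma derivative_eq2:
  fixes a :: 'n
  assumes x: "x \<in> U"
  defines "ii \<equiv> tmet g x (tval I x) (tval I x)" and "ij \<equiv> tmet g x (tval I x) (tval J x)"
    and "nii \<equiv> tmet g x (tconn g I a x) (tval I x)" and "nij \<equiv> tmet g x (tconn g I a x) (tval J x)"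
    and "nji \<equiv> tmet g x (tconn g J a x) (tval I x)"
  shows "2 * lam * v x * pd a v x = - (m + real CARD('n) - 1) * (2 * v x * pd a v x * ii + (v x)\<^sup>2 * (2 * nii))
      + m * ((pd a u x * v x + u x * pd a v x) * ij + u x * v x * (nij + nji))"
proof -
  have I: "tsmooth U I" and J: "tsmooth U J"
    using tsmooth_scale_tractor u_smooth v_smooth by auto
  have lhs: "has_pd a (\<lambda>y. lam * (v y)\<^sup>2) x (0 * (v x)\<^sup>2 + lam * (2 * v x * pd a v x))"
    by (intro has_pd_mult has_pd_const has_pd_power2 smooth_has_pd[OF open_U v_smooth x])
  have rhs: "has_pd a (\<lambda>y. - (m + real CARD('n) - 1) * (v y)\<^sup>2 * tmet g y (tval I y) (tval I y)
      + m * u y * v y * tmet g y (tval I y) (tval J y)) x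
    ((0 * (v x)\<^sup>2 + - (m + real CARD('n) - 1) * (2 * v x * pd a v x)) * ii
      + - (m + real CARD('n) - 1) * (v x)\<^sup>2 * (nii + nii)
     + (((0 * u x + m * pd a u x) * v x + m * u x * pd a v x) * ij + m * u x * v x * (nij + nji)))"
    unfolding ii_def ij_def nii_def nij_def nji_def
    by (intro has_pd_add has_pd_mult has_pd_const has_pd_power2 has_pd_tmet[OF x] I J
        smooth_has_pd[OF open_U u_smooth x] smooth_has_pd[OF open_U v_smooth x])
  show ?thesis
    using has_pd_unique_open[OF open_U x eq2_tractor lhs rhs] by algebra
qed

lemma derivative_eq3:
  fixes a :: 'n
  assumes x: "x \<in> U"
  defines "ij \<equiv> tmet g x (tval I x) (tval J x)" and "jj \<equiv> tmet g x (tval J x) (tval J x)"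
    and "nij \<equiv> tmet g x (tconn g I a x) (tval J x)" and "nji \<equiv> tmet g x (tconn g J a x) (tval I x)"
    and "njj \<equiv> tmet g x (tconn g J a x) (tval J x)"
  shows "2 * mu * u x * pd a u x = - (m + real CARD('n) - 2) * ((pd a u x * v x + u x * pd a v x) * ij
      + u x * v x * (nij + nji)) + (m - 1) * (2 * u x * pd a u x * jj + (u x)\<^sup>2 * (2 * njj))"
proof -
  have I: "tsmooth U I" and J: "tsmooth U J"
    using tsmooth_scale_tractor u_smooth v_smooth by auto
  have lhs: "has_pd a (\<lambda>y. mu * (u y)\<^sup>2) x (0 * (u x)\<^sup>2 + mu * (2 * u x * pd a u x))"
    by (intro has_pd_mult has_pd_const has_pd_power2 smooth_has_pd[OF open_U u_smooth x])
  have rhs: "has_pd a (\<lambda>y. - (m + real CARD('n) - 2) * u y * v y * tmet g y (tval I y) (tval J y)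
      + (m - 1) * (u y)\<^sup>2 * tmet g y (tval J y) (tval J y)) x
    ((((0 * u x + - (m + real CARD('n) - 2) * pd a u x) * v x
        + - (m + real CARD('n) - 2) * u x * pd a v x) * ij
      + - (m + real CARD('n) - 2) * u x * v x * (nij + nji))
     + ((0 * (u x)\<^sup>2 + (m - 1) * (2 * u x * pd a u x)) * jj + (m - 1) * (u x)\<^sup>2 * (njj + njj)))"
    unfolding ij_def jj_def nij_def nji_def njj_def
    by (intro has_pd_add has_pd_mult has_pd_const has_pd_power2 has_pd_tmet[OF x] I J
        smooth_has_pd[OF open_U u_smooth x] smooth_has_pd[OF open_U v_smooth x])
  show ?thesis
    using has_pd_unique_open[OF open_U x eq3_tractor lhs rhs] by algebra
qed

text \<open>The parts of the two claimed identities that do not vanish identically. In the second,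
  the derivative of <I,J> is expanded by metric compatibility, so that the residual is visibly
  continuous.\<close>

definition bottom_residual :: "'n \<Rightarrow> real^'n \<Rightarrow> real" where
  "bottom_residual a x = (m + real CARD('n) - 2) * v x * snd (snd (tconn g I a x))
    - m * u x * snd (snd (tconn g J a x))
    - ((m + real CARD('n) - 2) * tmet g x (tconn g I a x) (tval J x)
       - m * tmet g x (tconn g J a x) (tval I x)) / real CARD('n)"

definition second_residual :: "'n \<Rightarrow> real^'n \<Rightarrow> real" where
  "second_residual a x =
    m * real CARD('n) * (m + real CARD('n) - 2) * tmet g x (tval I x) (tval J x)
      * (v x * pd a u x - u x * pd a v x)
    - m * (m + real CARD('n) - 2) * (2 * m + real CARD('n) - 2) * u x * v x
      * (tmet g x (tconn g I a x) (tval J x) + tmet g x (tconn g J a x) (tval I x))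
    + 2 * (m - 1) * (m + real CARD('n) - 1) * (m + real CARD('n) - 2) * u x * v x
      * tmet g x (tconn g I a x) (tval J x)
    + 2 * m * (m - 1) * (m + real CARD('n) - 1) * u x * v x * tmet g x (tconn g J a x) (tval I x)"

lemma residuals_weighted:
  assumes x: "x \<in> U"
  shows "u x * v x * bottom_residual a x = 0" "u x * v x * second_residual a x = 0"
proof -
  note core = quasi_einstein_algebra[OF
      pairing_relation[OF x, where K = "tval I x", unfolded tval_scale_tractor_top]
      pairing_relation[OF x, where K = "tval J x", unfolded tval_scale_tractor_top]
      eq2_tractor[OF x] derivative_eq2[OF x] eq3_tractor[OF x] derivative_eq3[OF x]]
  show "u x * v x * bottom_residual a x = 0"
    using core(1) dim_facts(1) unfolding bottom_residual_def by (simp add: field_simps)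
  show "u x * v x * second_residual a x = 0"
    using core(2) unfolding second_residual_def by simp
qed

lemma residuals_continuous:
  "continuous_on U (bottom_residual a)" "continuous_on U (second_residual a)"
proof -
  have I: "tsmooth U I" and J: "tsmooth U J"
    using tsmooth_scale_tractor u_smooth v_smooth by auto
  have "smooth U (bottom_residual a)" "smooth U (second_residual a)"
    unfolding bottom_residual_def[abs_def] second_residual_def[abs_def]
    by (intro smooth_rules u_smooth v_smooth tconn_bottom_smooth tmet_tconn_smooth tmet_smooth I J)+
  then show "continuous_on U (bottom_residual a)" "continuous_on U (second_residual a)"
    using smooth_continuous_on[OF open_U] by auto
qed

lemma residuals_vanish_where_u_vanishes:
  assumes "open W" "W \<subseteq> U" "x \<in> W" "\<forall>y\<in>W. u y = 0"
  shows "bottom_residual a x = 0" "second_residual a x = 0"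
proof -
  have I0: "tval I y = tzero" if "y \<in> W" for y
    using scale_tractor_eq_tzero_open[OF assms(1) that] assms(4) by blast
  have "tconn g I a x = tzero"
    using tconn_eq_tzero_open[OF assms(1,3) I0] .
  then show "bottom_residual a x = 0" "second_residual a x = 0"
    using I0[OF assms(3)] assms(3,4)
    by (simp_all add: bottom_residual_def second_residual_def tmet_def tzero_def)
qed

lemma residuals_vanish_where_v_vanishes:
  assumes "open W" "W \<subseteq> U" "x \<in> W" "\<forall>y\<in>W. v y = 0"
  shows "bottom_residual a x = 0" "second_residual a x = 0"
proof -
  have J0: "tval J y = tzero" if "y \<in> W" for y
    using scale_tractor_eq_tzero_open[OF assms(1) that] assms(4) by blast
  have "tconn g J a x = tzero"
    using tconn_eq_tzero_open[OF assms(1,3) J0] .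
  then show "bottom_residual a x = 0" "second_residual a x = 0"
    using J0[OF assms(3)] assms(3,4)
    by (simp_all add: bottom_residual_def second_residual_def tmet_def tzero_def)
qed

lemma residuals_vanish:
  assumes x: "x \<in> U"
  shows "bottom_residual a x = 0" "second_residual a x = 0"
proof -
  note density = vanishes_by_density[OF open_U _ smooth_continuous_on[OF open_U u_smooth], of _ v]
  show "bottom_residual a x = 0"
  proof (rule density[OF residuals_continuous(1) _ _ _ x])
    show "bottom_residual a y = 0" if "y \<in> U" "u y \<noteq> 0" "v y \<noteq> 0" for y
      using residuals_weighted(1)[OF that(1)] that(2,3) by simp
  qed (use residuals_vanish_where_u_vanishes(1) residuals_vanish_where_v_vanishes(1) in blast)+
  show "second_residual a x = 0"
  proof (rule density[OF residuals_continuous(2) _ _ _ x])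
    show "second_residual a y = 0" if "y \<in> U" "u y \<noteq> 0" "v y \<noteq> 0" for y
      using residuals_weighted(2)[OF that(1)] that(2,3) by simp
  qed (use residuals_vanish_where_u_vanishes(2) residuals_vanish_where_v_vanishes(2) in blast)+
qed

lemma tractor_identity:
  assumes x: "x \<in> U"
  shows "tadd (tadd (tscale ((m + real CARD('n) - 2) * v x) (tconn g I a x))
                    (tscale (- m * u x) (tconn g J a x)))
      (tscale (- (1 / real CARD('n)) * ((m + real CARD('n) - 2) * tmet g x (tconn g I a x) (tval J x)
                                         - m * tmet g x (tconn g J a x) (tval I x))) Xtr) = tzero"
  using tconn_scale_tractor_top[OF x] middle_relation[OF x] residuals_vanish(1)[OF x, of a]
  by (simp add: tadd_def tscale_def tzero_def Xtr_def bottom_residual_def fun_eq_iff)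

lemma scalar_identity:
  assumes x: "x \<in> U"
  shows "m * real CARD('n) * (m + real CARD('n) - 2) * tmet g x (tval I x) (tval J x)
      * (v x * pd a u x - u x * pd a v x)
    - m * (m + real CARD('n) - 2) * (2 * m + real CARD('n) - 2) * u x * v x
      * pd a (\<lambda>y. tmet g y (tval I y) (tval J y)) x
    + 2 * (m - 1) * (m + real CARD('n) - 1) * (m + real CARD('n) - 2) * u x * v x
      * tmet g x (tconn g I a x) (tval J x)
    + 2 * m * (m - 1) * (m + real CARD('n) - 1) * u x * v x * tmet g x (tconn g J a x) (tval I x) = 0"
proof -
  have "pd a (\<lambda>y. tmet g y (tval I y) (tval J y)) x
      = tmet g x (tconn g I a x) (tval J x) + tmet g x (tconn g J a x) (tval I x)"
    using has_pd_imp_pd[OF has_pd_tmet[OF x]] tsmooth_scale_tractor u_smooth v_smooth by blast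
  then show ?thesis
    using residuals_vanish(2)[OF x, of a] by (simp add: second_residual_def)
qed

end

theorem proposition4p2:
  fixes U :: "(real^'n::finite) set"
    and g :: "real^'n \<Rightarrow> 'n \<Rightarrow> 'n \<Rightarrow> real"
    and u v :: "real^'n \<Rightarrow> real"
    and m lam mu :: real
  defines "n \<equiv> real CARD('n)"
  assumes dim: "CARD('n) \<ge> 3"
    and U_open: "open U"
    and metric: "riemannian_metric_on U g"
    and u_smooth: "smooth_on U u"
    and v_smooth: "smooth_on U v"
    and eq1: "\<forall>x\<in>U. \<forall>i j. tracefree g
               (\<lambda>i j y. u y * v y * ricci g i j y + (m + n - 2) * v y * hess g u i j y
                        - m * u y * hess g v i j y) i j x = 0"
    and eq2: "\<forall>x\<in>U. n * lam * (v x)\<^sup>2 =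
               (u x * v x)\<^sup>2 * scal g x + (m + 2*n - 2) * u x * (v x)\<^sup>2 * lap g u x
               - m * (u x)\<^sup>2 * v x * lap g v x - (m + n - 1) * n * (v x)\<^sup>2 * ginner g u u x
               + m * n * u x * v x * ginner g u v x"
    and eq3: "\<forall>x\<in>U. n * mu * (u x)\<^sup>2 =
               (u x * v x)\<^sup>2 * scal g x + (m + n - 2) * u x * (v x)\<^sup>2 * lap g u x
               - (m - n) * (u x)\<^sup>2 * v x * lap g v x - (m + n - 2) * n * u x * v x * ginner g u v x
               + n * (m - 1) * (u x)\<^sup>2 * ginner g v v x"
  shows "\<forall>x\<in>U. \<forall>a.
          (let I = fscale (1/n) (tractorD g 1 u); J = fscale (1/n) (tractorD g 1 v);
               XI = tmet g x Xtr (tval I x); XJ = tmet g x Xtr (tval J x);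
               nIJ = tmet g x (tconn g I a x) (tval J x);
               nJI = tmet g x (tconn g J a x) (tval I x)
           in tadd (tadd (tscale ((m + n - 2) * XJ) (tconn g I a x))
                         (tscale (- m * XI) (tconn g J a x)))
                   (tscale (- (1/n) * ((m + n - 2) * nIJ - m * nJI)) Xtr) = tzero
            \<and> m * n * (m + n - 2) * tmet g x (tval I x) (tval J x)
                 * (XJ * pd a (\<lambda>y. tmet g y Xtr (tval I y)) x
                    - XI * pd a (\<lambda>y. tmet g y Xtr (tval J y)) x)
              - m * (m + n - 2) * (2*m + n - 2) * XI * XJ
                 * pd a (\<lambda>y. tmet g y (tval I y) (tval J y)) x
              + 2 * (m - 1) * (m + n - 1) * (m + n - 2) * XI * XJ * nIJ
              + 2 * m * (m - 1) * (m + n - 1) * XI * XJ * nJI = 0)"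
proof -
  interpret quasi_einstein_chart U g u v m lam mu
    using U_open metric dim smooth_on_imp_smooth[OF u_smooth] smooth_on_imp_smooth[OF v_smooth]
      eq1 eq2 eq3
    unfolding n_def by unfold_locales auto
  have X_pairing: "(\<lambda>y. tmet g y Xtr (tval (scale_tractor g w) y)) = w" for w
    using tmet_X_scale_tractor by blast
  show ?thesis
    unfolding n_def Let_def fscale_tractorD tmet_X_scale_tractor X_pairing
    using tractor_identity scalar_identity by (simp add: mult_ac)
qed

end
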